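(* Let $R$ be a ring with identity and an involution $*$, and let $a\in R$. Then: (i) $a$ is left $(a^*,1)$-invertible if and only if $a$ has a $\{1,4\}$-inverse; (ii) $a$ is right $(1,a^* )$-invertible if and only if $a$ has a $\{1,3\}$-inverse; (iii) $a$ is Moore–Penrose invertible if and only if $a$ is left $(a^*,1)$-invertible and right $(1,a^* )$-invertible.
   Context: An involution is a map $*:R\to R$ with $(x^* )^*=x$, $(xy)^*=y^*x^*$, $(x+y)^*=x^*+y^*$. For $x\in R$: $xR=\{xr:r\in R\}$, $Rx=\{rx:r\in R\}$. For $a,b,c\in R$, $a$ is left $(b,c)$-invertible if there is $y$ with $Ry\subseteq Rc$ and $yab=b$; right $(b,c)$-invertible if there is $y$ with $yR\subseteq bR$ and $cay=c$. A $\{1,3\}$-inverse of $a$ is $y$ with $aya=a$ and $(ay)^*=ay$; a $\{1,4\}$-inverse is $y$ with $aya=a$ and $(ya)^*=ya$; $a$ is Moore–Penrose invertible if there is $y$ with $aya=a$, $yay=y$, $(ay)^*=ay$, $(ya)^*=ya$. *)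

theory Defs
  imports Main
begin

definition is_involution :: "('a::ring_1 \<Rightarrow> 'a) \<Rightarrow> bool" where
  "is_involution s \<longleftrightarrow>
     (\<forall>x. s (s x) = x) \<and> (\<forall>x y. s (x * y) = s y * s x) \<and>
     (\<forall>x y. s (x + y) = s x + s y)"

definition left_ideal :: "'a::ring_1 \<Rightarrow> 'a set" where
  "left_ideal x = {r * x | r. True}"

definition right_ideal :: "'a::ring_1 \<Rightarrow> 'a set" where
  "right_ideal x = {x * r | r. True}"

definition left_bc_invertible :: "'a::ring_1 \<Rightarrow> 'a \<Rightarrow> 'a \<Rightarrow> bool" where
  "left_bc_invertible a b c \<longleftrightarrow>
     (\<exists>y. left_ideal y \<subseteq> left_ideal c \<and> y * a * b = b)"

definition right_bc_invertible :: "'a::ring_1 \<Rightarrow> 'a \<Rightarrow> 'a \<Rightarrow> bool" where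
  "right_bc_invertible a b c \<longleftrightarrow>
     (\<exists>y. right_ideal y \<subseteq> right_ideal b \<and> c * a * y = c)"

definition has_inv13 :: "('a::ring_1 \<Rightarrow> 'a) \<Rightarrow> 'a \<Rightarrow> bool" where
  "has_inv13 s a \<longleftrightarrow> (\<exists>y. a * y * a = a \<and> s (a * y) = a * y)"

definition has_inv14 :: "('a::ring_1 \<Rightarrow> 'a) \<Rightarrow> 'a \<Rightarrow> bool" where
  "has_inv14 s a \<longleftrightarrow> (\<exists>y. a * y * a = a \<and> s (y * a) = y * a)"

definition mp_invertible :: "('a::ring_1 \<Rightarrow> 'a) \<Rightarrow> 'a \<Rightarrow> bool" where
  "mp_invertible s a \<longleftrightarrow>
     (\<exists>y. a * y * a = a \<and> y * a * y = y \<and> s (a * y) = a * y \<and> s (y * a) = y * a)"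

end

theory Submission
  imports Defs
begin

(* With an involution, y a a* = a* says that (y a)* = y a (y a)*; the right side is
   self-adjoint, so y a is self-adjoint and applying * back gives a y a = a. The
   {1,3} case is the mirror image, and a {1,4}-inverse y1 together with a
   {1,3}-inverse y2 yield the Moore-Penrose inverse y1 a y2. *)

lemma is_involutionD:
  assumes "is_involution s"
  shows involution_involutive: "s (s x) = x"
    and involution_mult: "s (x * y) = s y * s x"
  using assms unfolding is_involution_def by auto

lemma left_bc_invertible_one_iff:
  "left_bc_invertible a b 1 \<longleftrightarrow> (\<exists>y. y * a * b = b)"
  unfolding left_bc_invertible_def left_ideal_def by auto

lemma right_bc_invertible_one_iff:
  "right_bc_invertible a 1 c \<longleftrightarrow> (\<exists>y. c * a * y = c)"
  unfolding right_bc_invertible_def right_ideal_def by auto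

lemma involution_fixed_if_eq_mult_star:
  assumes "is_involution s" and "s p = p * s p"
  shows "s p = p"
proof -
  have "p = s (p * s p)"
    using assms by (metis involution_involutive)
  also have "\<dots> = p * s p"
    using assms(1) by (simp add: involution_mult involution_involutive)
  finally show ?thesis
    using assms(2) by simp
qed

lemma involution_fixed_if_eq_star_mult:
  assumes "is_involution s" and "s p = s p * p"
  shows "s p = p"
proof -
  have "p = s (s p * p)"
    using assms by (metis involution_involutive)
  also have "\<dots> = s p * p"
    using assms(1) by (simp add: involution_mult involution_involutive)
  finally show ?thesis
    using assms(2) by simp
qed

lemma inv14_iff_left_absorbs_star:
  assumes inv: "is_involution s"
  shows "y * a * s a = s a \<longleftrightarrow> a * y * a = a \<and> s (y * a) = y * a"
proof
  assume h: "y * a * s a = s a"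
  have "s (y * a) = y * a * s a * s y"
    using h inv by (simp add: involution_mult)
  also have "\<dots> = y * a * s (y * a)"
    using inv by (simp add: involution_mult mult.assoc)
  finally have sym: "s (y * a) = y * a"
    using inv involution_fixed_if_eq_mult_star by blast
  have "s (a * y * a) = s a"
    using inv h sym by (simp add: involution_mult mult.assoc)
  then have "a * y * a = a"
    using inv by (metis involution_involutive)
  with sym show "a * y * a = a \<and> s (y * a) = y * a" by blast
next
  assume h: "a * y * a = a \<and> s (y * a) = y * a"
  have "s a = s (a * (y * a))"
    using h by (simp add: mult.assoc)
  also have "\<dots> = y * a * s a"
    using h inv by (simp add: involution_mult)
  finally show "y * a * s a = s a" by simp
qed

lemma inv13_iff_right_absorbs_star:
  assumes inv: "is_involution s"
  shows "s a * a * y = s a \<longleftrightarrow> a * y * a = a \<and> s (a * y) = a * y"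
proof
  assume h: "s a * a * y = s a"
  have "s (a * y) = s y * (s a * a * y)"
    using h inv by (simp add: involution_mult)
  also have "\<dots> = s (a * y) * (a * y)"
    using inv by (simp add: involution_mult mult.assoc)
  finally have sym: "s (a * y) = a * y"
    using inv involution_fixed_if_eq_star_mult by blast
  have "s (a * y * a) = s a"
    using inv h sym by (simp add: involution_mult mult.assoc)
  then have "a * y * a = a"
    using inv by (metis involution_involutive)
  with sym show "a * y * a = a \<and> s (a * y) = a * y" by blast
next
  assume h: "a * y * a = a \<and> s (a * y) = a * y"
  have "s a = s (a * y * a)"
    using h by simp
  also have "\<dots> = s a * s (a * y)"
    using inv by (simp add: involution_mult)
  also have "\<dots> = s a * a * y"
    using h by (simp add: mult.assoc)
  finally show "s a * a * y = s a" by simp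
qed

lemma left_bc_invertible_star_one_iff_has_inv14:
  assumes "is_involution s"
  shows "left_bc_invertible a (s a) 1 \<longleftrightarrow> has_inv14 s a"
  unfolding left_bc_invertible_one_iff has_inv14_def
  using inv14_iff_left_absorbs_star[OF assms] by blast

lemma right_bc_invertible_one_star_iff_has_inv13:
  assumes "is_involution s"
  shows "right_bc_invertible a 1 (s a) \<longleftrightarrow> has_inv13 s a"
  unfolding right_bc_invertible_one_iff has_inv13_def
  using inv13_iff_right_absorbs_star[OF assms] by blast

lemma mp_invertible_iff_has_inv14_has_inv13:
  "mp_invertible s a \<longleftrightarrow> has_inv14 s a \<and> has_inv13 s a"
proof
  assume "mp_invertible s a"
  then show "has_inv14 s a \<and> has_inv13 s a"
    unfolding mp_invertible_def has_inv14_def has_inv13_def by blast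
next
  assume "has_inv14 s a \<and> has_inv13 s a"
  then obtain y1 y2 where y1: "a * y1 * a = a" "s (y1 * a) = y1 * a"
    and y2: "a * y2 * a = a" "s (a * y2) = a * y2"
    unfolding has_inv14_def has_inv13_def by blast
  define z where "z = y1 * a * y2"
  have az: "a * z = a * y2"
    using y1 unfolding z_def by (metis mult.assoc)
  have za: "z * a = y1 * a"
    using y2 unfolding z_def by (metis mult.assoc)
  have "a * z * a = a"
    using az y2 by simp
  moreover have "z * a * z = z"
    using za y1(1) unfolding z_def by (metis mult.assoc)
  ultimately show "mp_invertible s a"
    unfolding mp_invertible_def using az za y1 y2 by metis
qed

theorem proposition2p17:
  fixes star :: "'a::ring_1 \<Rightarrow> 'a" and a :: 'a
  assumes "is_involution star"
  shows "(left_bc_invertible a (star a) 1 \<longleftrightarrow> has_inv14 star a)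
    \<and> (right_bc_invertible a 1 (star a) \<longleftrightarrow> has_inv13 star a)
    \<and> (mp_invertible star a \<longleftrightarrow>
         left_bc_invertible a (star a) 1 \<and> right_bc_invertible a 1 (star a))"
  using left_bc_invertible_star_one_iff_has_inv14[OF assms]
    right_bc_invertible_one_star_iff_has_inv13[OF assms]
    mp_invertible_iff_has_inv14_has_inv13
  by blast

end
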